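(* Let $(S,A,P,R,\mu,\gamma)$ be a Markov decision process with discount factor $\gamma\in(0,1)$ and rewards bounded with $R_{\max}=\max_{s,a}R(s,a)$. Let $\pi_{\text{human}}$ and $\pi_{\text{AV}}$ be policies, let $\mathcal{T}:S\to\{0,1\}$ be a switch function, and define the mixed behavior policy $\pi_{\text{mix}}(\cdot\mid s)=\mathcal{T}(s)\,\pi_{\text{human}}(\cdot\mid s)+(1-\mathcal{T}(s))\,\pi_{\text{AV}}(\cdot\mid s)$. Assume $\mathbb{E}_{s\sim d_{\pi_{\text{mix}}}}\|\pi_{\text{human}}(\cdot\mid s)-\pi_{\text{AV}}(\cdot\mid s)\|_1>0$ and let $$\beta=\frac{\mathbb{E}_{s\sim d_{\pi_{\text{mix}}}}\left\|\mathcal{T}(s)\left[\pi_{\text{human}}(\cdot\mid s)-\pi_{\text{AV}}(\cdot\mid s)\right]\right\|_1}{\mathbb{E}_{s\sim d_{\pi_{\text{mix}}}}\|\pi_{\text{human}}(\cdot\mid s)-\pi_{\text{AV}}(\cdot\mid s)\|_1}.$$ Let $\pi^*_{\text{AV}}$ be an optimal policy, i.e. one maximizing $J$. Then $$\left|J(\pi^*_{\text{AV}})-J(\pi_{\text{AV}})\right|\le \frac{\beta R_{\max}}{(1-\gamma)^2}\,\mathbb{E}_{s\sim d_{\pi_{\text{mix}}}}\|\pi_{\text{human}}(\cdot\mid s)-\pi_{\text{AV}}(\cdot\mid s)\|_1+\left|J(\pi^*_{\text{AV}})-J(\pi_{\text{mix}})\right|.$$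
   Context: For a policy $\pi$, $J(\pi)=\mathbb{E}_{\tau\sim\pi}\left[\sum_{t=0}^\infty\gamma^t R(s_t,a_t)\right]$ where $s_0\sim\mu$, $a_t\sim\pi(\cdot\mid s_t)$, $s_{t+1}\sim P(\cdot\mid s_t,a_t)$. $d_\pi$ denotes the normalized discounted state visitation distribution $d_\pi(s)=(1-\gamma)\sum_{t\ge0}\gamma^t\Pr(s_t=s)$ under $\pi$. $\|\cdot\|_1$ is the $\ell_1$ norm on distributions over actions. *)

theory Defs
  imports "HOL-Analysis.Analysis"
begin

text \<open>Finite MDP with state type 's and action type 'a (both finite).
  A (stationary, stochastic, Markov) policy is p s a = probability of action a in state s.\<close>

definition is_distribution :: "('x::finite \<Rightarrow> real) \<Rightarrow> bool" where
  "is_distribution p \<longleftrightarrow> (\<forall>x. 0 \<le> p x) \<and> (\<Sum>x\<in>UNIV. p x) = 1"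

definition is_policy :: "('s::finite \<Rightarrow> 'a::finite \<Rightarrow> real) \<Rightarrow> bool" where
  "is_policy p \<longleftrightarrow> (\<forall>s. is_distribution (p s))"

definition is_transition :: "('s::finite \<Rightarrow> 'a::finite \<Rightarrow> 's \<Rightarrow> real) \<Rightarrow> bool" where
  "is_transition P \<longleftrightarrow> (\<forall>s a. is_distribution (P s a))"

primrec state_dist ::
  "('s::finite \<Rightarrow> 'a::finite \<Rightarrow> 's \<Rightarrow> real) \<Rightarrow> ('s \<Rightarrow> real) \<Rightarrow> ('s \<Rightarrow> 'a \<Rightarrow> real) \<Rightarrow> nat \<Rightarrow> 's \<Rightarrow> real"
where
  "state_dist P mu p 0 = mu"
| "state_dist P mu p (Suc t) =
     (\<lambda>s'. \<Sum>s\<in>UNIV. state_dist P mu p t s * (\<Sum>a\<in>UNIV. p s a * P s a s'))"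

definition J ::
  "('s::finite \<Rightarrow> 'a::finite \<Rightarrow> 's \<Rightarrow> real) \<Rightarrow> ('s \<Rightarrow> real) \<Rightarrow> ('s \<Rightarrow> 'a \<Rightarrow> real) \<Rightarrow> real
   \<Rightarrow> ('s \<Rightarrow> 'a \<Rightarrow> real) \<Rightarrow> real"
where
  "J P mu R \<gamma> p = (\<Sum>t. \<gamma> ^ t * (\<Sum>s\<in>UNIV. state_dist P mu p t s * (\<Sum>a\<in>UNIV. p s a * R s a)))"

definition visit ::
  "('s::finite \<Rightarrow> 'a::finite \<Rightarrow> 's \<Rightarrow> real) \<Rightarrow> ('s \<Rightarrow> real) \<Rightarrow> real \<Rightarrow> ('s \<Rightarrow> 'a \<Rightarrow> real) \<Rightarrow> 's \<Rightarrow> real"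
where
  "visit P mu \<gamma> p s = (1 - \<gamma>) * (\<Sum>t. \<gamma> ^ t * state_dist P mu p t s)"

definition Rmax :: "('s::finite \<Rightarrow> 'a::finite \<Rightarrow> real) \<Rightarrow> real" where
  "Rmax R = Max {\<bar>R s a\<bar> | s a. True}"

definition mix_policy ::
  "('s \<Rightarrow> real) \<Rightarrow> ('s \<Rightarrow> 'a \<Rightarrow> real) \<Rightarrow> ('s \<Rightarrow> 'a \<Rightarrow> real) \<Rightarrow> 's \<Rightarrow> 'a \<Rightarrow> real" where
  "mix_policy T pih piav = (\<lambda>s a. T s * pih s a + (1 - T s) * piav s a)"

end

theory Submission
  imports Defs
begin

(*
  By the triangle inequality through J(pi_mix) it suffices to bound |J(pi_mix) - J(pi_AV)|.
  The performance difference lemma writes J(p') - J(p) as the discounted sum over t of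
  E_{s_t ~ p'} sum_a (p'(a|s) - p(a|s)) Q^p(s,a): telescoping with the Bellman equation
  for V^p leaves only the rewards of p'. Since |Q^p| <= Rmax/(1-gamma) and the discounted
  state laws sum to d_{p'}/(1-gamma), the difference is at most
  Rmax/(1-gamma)^2 E_{d_mix} ||pi_mix - pi_AV||_1. Finally pi_mix - pi_AV = T (pi_h - pi_AV),
  whose expected l1 norm is exactly beta times the normaliser.
*)

definition dirac :: "'s \<Rightarrow> 's \<Rightarrow> real" where
  "dirac s0 s = (if s = s0 then 1 else 0)"

definition expect :: "('s::finite \<Rightarrow> real) \<Rightarrow> ('s \<Rightarrow> real) \<Rightarrow> real" where
  "expect d f = (\<Sum>s\<in>UNIV. d s * f s)"

definition step_dist ::
  "('s::finite \<Rightarrow> 'a::finite \<Rightarrow> 's \<Rightarrow> real) \<Rightarrow> ('s \<Rightarrow> 'a \<Rightarrow> real) \<Rightarrow> ('s \<Rightarrow> real) \<Rightarrow> 's \<Rightarrow> real"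
where
  "step_dist P p d s' = expect d (\<lambda>s. expect (p s) (\<lambda>a. P s a s'))"

lemma expect_add: "expect d (\<lambda>s. f s + g s) = expect d f + expect d g"
  by (simp add: expect_def distrib_left sum.distrib)

lemma expect_diff: "expect d (\<lambda>s. f s - g s) = expect d f - expect d g"
  by (simp add: expect_def right_diff_distrib sum_subtractf)

lemma expect_cmult: "expect d (\<lambda>s. c * f s) = c * expect d f"
  by (simp add: expect_def sum_distrib_left mult.left_commute)

lemma expect_diff_left: "expect (\<lambda>s. d s - e s) f = expect d f - expect e f"
  by (simp add: expect_def left_diff_distrib sum_subtractf)

lemma expect_dirac: "expect (dirac s0) f = f s0"
  by (simp add: expect_def dirac_def of_bool_def[symmetric])

lemma expect_commute:
  "expect d (\<lambda>x. expect (\<lambda>y. e y x) f) = expect (\<lambda>y. expect d (e y)) f"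
  unfolding expect_def sum_distrib_left sum_distrib_right mult.assoc
  by (rule sum.swap)

lemma expect_const: "is_distribution d \<Longrightarrow> expect d (\<lambda>_. c) = c"
  by (simp add: expect_def is_distribution_def flip: sum_distrib_right)

lemma expect_abs_le:
  assumes "is_distribution d" "\<And>s. \<bar>f s\<bar> \<le> g s"
  shows "\<bar>expect d f\<bar> \<le> expect d g"
proof -
  have "\<bar>expect d f\<bar> \<le> (\<Sum>s\<in>UNIV. \<bar>d s * f s\<bar>)"
    unfolding expect_def by (rule sum_abs)
  also have "\<dots> \<le> expect d g"
    unfolding expect_def using assms
    by (intro sum_mono) (auto simp: is_distribution_def abs_mult intro: mult_left_mono)
  finally show ?thesis .
qed

lemma abs_expect_le_const:
  assumes "is_distribution d" "\<And>s. \<bar>f s\<bar> \<le> B"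
  shows "\<bar>expect d f\<bar> \<le> B"
  using expect_abs_le[OF assms] expect_const[OF assms(1)] by simp

lemma abs_expect_le_l1:
  assumes "\<And>s. \<bar>f s\<bar> \<le> B"
  shows "\<bar>expect d f\<bar> \<le> B * (\<Sum>s\<in>UNIV. \<bar>d s\<bar>)"
proof -
  have "\<bar>expect d f\<bar> \<le> (\<Sum>s\<in>UNIV. \<bar>d s * f s\<bar>)"
    unfolding expect_def by (rule sum_abs)
  also have "\<dots> \<le> (\<Sum>s\<in>UNIV. \<bar>d s\<bar> * B)"
    using assms by (intro sum_mono) (simp add: abs_mult mult_left_mono)
  finally show ?thesis
    by (simp add: sum_distrib_left mult.commute)
qed

lemma is_distribution_dirac: "is_distribution (dirac s0)"
  by (simp add: is_distribution_def dirac_def)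

lemma expect_step_dist:
  "expect (step_dist P p d) V = expect d (\<lambda>s. expect (p s) (\<lambda>a. expect (P s a) V))"
proof -
  have "step_dist P p d = (\<lambda>s'. expect d (\<lambda>s. expect (p s) (\<lambda>a. P s a s')))"
    by (simp add: fun_eq_iff step_dist_def)
  then show ?thesis
    by (simp add: expect_commute[symmetric])
qed

lemma is_distribution_step_dist:
  assumes P: "is_transition P" and p: "is_policy p" and d: "is_distribution d"
  shows "is_distribution (step_dist P p d)"
proof -
  have "0 \<le> step_dist P p d s'" for s'
    using assms unfolding step_dist_def expect_def is_transition_def is_policy_def is_distribution_def
    by (intro sum_nonneg mult_nonneg_nonneg) auto
  moreover have "expect (step_dist P p d) (\<lambda>_. 1) = 1"
    using P p d by (simp add: expect_step_dist expect_const is_transition_def is_policy_def)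
  ultimately show ?thesis
    by (simp add: is_distribution_def expect_def)
qed

lemma state_dist_Suc_step: "state_dist P mu p (Suc t) = step_dist P p (state_dist P mu p t)"
  by (simp add: fun_eq_iff step_dist_def expect_def)

lemma state_dist_Suc_shift: "state_dist P mu p (Suc t) = state_dist P (step_dist P p mu) p t"
  by (induction t) (simp_all only: state_dist_Suc_step state_dist.simps(1))

lemma state_dist_linear:
  "state_dist P mu p t = (\<lambda>s. expect mu (\<lambda>s0. state_dist P (dirac s0) p t s))"
proof (induction t)
  case 0
  show ?case
    by (simp add: fun_eq_iff expect_def dirac_def of_bool_def[symmetric])
next
  case (Suc t)
  then show ?case
    by (simp only: state_dist_Suc_step) (simp add: fun_eq_iff step_dist_def expect_commute[symmetric])
qed

lemma expect_state_dist_linear: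
  "expect (state_dist P mu p t) f = expect mu (\<lambda>s0. expect (state_dist P (dirac s0) p t) f)"
  unfolding state_dist_linear[of P mu] by (simp add: expect_commute)

lemma is_distribution_state_dist:
  assumes "is_transition P" "is_policy p" "is_distribution mu"
  shows "is_distribution (state_dist P mu p t)"
  using assms
  by (induction t) (auto simp del: state_dist.simps(2) simp: state_dist_Suc_step is_distribution_step_dist)

lemma abs_le_Rmax: "\<bar>R s a\<bar> \<le> Rmax R"
proof -
  have "{\<bar>R s a\<bar> | s a. True} = (\<lambda>(s, a). \<bar>R s a\<bar>) ` UNIV"
    by auto
  then show ?thesis
    unfolding Rmax_def by (intro Max_ge) auto
qed

lemma J_eq_suminf:
  "J P mu R \<gamma> p = (\<Sum>t. \<gamma> ^ t * expect (state_dist P mu p t) (\<lambda>s. expect (p s) (R s)))"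
  by (simp add: J_def expect_def)

lemma expect_suminf:
  assumes "\<And>s. summable (\<lambda>t. f t s)"
  shows "expect d (\<lambda>s. \<Sum>t. f t s) = (\<Sum>t. expect d (f t))"
  unfolding expect_def using assms
  by (simp add: suminf_mult suminf_sum summable_mult)

definition state_value ::
  "('s::finite \<Rightarrow> 'a::finite \<Rightarrow> 's \<Rightarrow> real) \<Rightarrow> ('s \<Rightarrow> 'a \<Rightarrow> real) \<Rightarrow> real \<Rightarrow> ('s \<Rightarrow> 'a \<Rightarrow> real) \<Rightarrow> 's \<Rightarrow> real"
where
  "state_value P R \<gamma> p s = J P (dirac s) R \<gamma> p"

definition action_value ::
  "('s::finite \<Rightarrow> 'a::finite \<Rightarrow> 's \<Rightarrow> real) \<Rightarrow> ('s \<Rightarrow> 'a \<Rightarrow> real) \<Rightarrow> real \<Rightarrow> ('s \<Rightarrow> 'a \<Rightarrow> real) \<Rightarrow> 's \<Rightarrow> 'a \<Rightarrow> real"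
where
  "action_value P R \<gamma> p s a = R s a + \<gamma> * expect (P s a) (state_value P R \<gamma> p)"

locale discounted_mdp =
  fixes P :: "'s::finite \<Rightarrow> 'a::finite \<Rightarrow> 's \<Rightarrow> real" and \<gamma> :: real
  assumes transition: "is_transition P"
    and discount_nonneg: "0 \<le> \<gamma>" and discount_less_one: "\<gamma> < 1"
begin

lemma summable_discounted_expect:
  assumes "is_policy p" "is_distribution mu"
  shows "summable (\<lambda>t. \<gamma> ^ t * expect (state_dist P mu p t) f)"
proof (rule summable_comparison_test'[where N = 0])
  define B where "B = (\<Sum>s\<in>UNIV. \<bar>f s\<bar>)"
  show "summable (\<lambda>t. \<gamma> ^ t * B)"
    using discount_nonneg discount_less_one by (intro summable_mult2 summable_geometric) auto
  fix t
  have "\<bar>expect (state_dist P mu p t) f\<bar> \<le> B"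
    unfolding B_def
    by (rule abs_expect_le_const[OF is_distribution_state_dist[OF transition assms]])
       (rule member_le_sum[where f = "\<lambda>s. \<bar>f s\<bar>"], auto)
  then show "norm (\<gamma> ^ t * expect (state_dist P mu p t) f) \<le> \<gamma> ^ t * B"
    using discount_nonneg by (simp add: abs_mult mult_left_mono)
qed

lemma J_eq_expect_state_value:
  assumes "is_policy p"
  shows "J P mu R \<gamma> p = expect mu (state_value P R \<gamma> p)"
proof -
  have "J P mu R \<gamma> p
      = (\<Sum>t. expect mu (\<lambda>s0. \<gamma> ^ t * expect (state_dist P (dirac s0) p t) (\<lambda>s. expect (p s) (R s))))"
    by (simp add: J_eq_suminf expect_state_dist_linear[of P mu] expect_cmult)
  also have "\<dots> = expect mu (\<lambda>s0. \<Sum>t. \<gamma> ^ t * expect (state_dist P (dirac s0) p t) (\<lambda>s. expect (p s) (R s)))"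
    by (rule expect_suminf[symmetric]) (rule summable_discounted_expect[OF assms is_distribution_dirac])
  also have "\<dots> = expect mu (state_value P R \<gamma> p)"
    by (rule arg_cong[where f = "expect mu"]) (simp add: fun_eq_iff state_value_def J_eq_suminf)
  finally show ?thesis .
qed

lemma J_unfold:
  assumes p: "is_policy p" and mu: "is_distribution mu"
  shows "J P mu R \<gamma> p = expect mu (\<lambda>s. expect (p s) (R s)) + \<gamma> * J P (step_dist P p mu) R \<gamma> p"
proof -
  let ?f = "\<lambda>t. \<gamma> ^ t * expect (state_dist P mu p t) (\<lambda>s. expect (p s) (R s))"
  have "\<gamma> * J P (step_dist P p mu) R \<gamma> p = (\<Sum>t. ?f (Suc t))"
    using summable_discounted_expect[OF p is_distribution_step_dist[OF transition p mu]]
    by (simp add: J_eq_suminf state_dist_Suc_shift suminf_mult[symmetric] mult.assoc del: state_dist.simps(2))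
  also have "\<dots> = J P mu R \<gamma> p - ?f 0"
    unfolding J_eq_suminf by (rule suminf_split_head[OF summable_discounted_expect[OF p mu]])
  finally show ?thesis
    by simp
qed

lemma abs_J_le:
  assumes p: "is_policy p" and mu: "is_distribution mu"
  shows "\<bar>J P mu R \<gamma> p\<bar> \<le> Rmax R / (1 - \<gamma>)"
proof -
  have "(\<lambda>t. \<gamma> ^ t * expect (state_dist P mu p t) (\<lambda>s. expect (p s) (R s))) sums J P mu R \<gamma> p"
    unfolding J_eq_suminf by (rule summable_sums[OF summable_discounted_expect[OF p mu]])
  moreover have "(\<lambda>t. \<gamma> ^ t * Rmax R) sums (Rmax R / (1 - \<gamma>))"
    using sums_mult2[OF geometric_sums, of \<gamma> "Rmax R"] discount_nonneg discount_less_one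
    by simp
  moreover have "\<bar>\<gamma> ^ t * expect (state_dist P mu p t) (\<lambda>s. expect (p s) (R s))\<bar> \<le> \<gamma> ^ t * Rmax R" for t
  proof -
    have "\<bar>expect (state_dist P mu p t) (\<lambda>s. expect (p s) (R s))\<bar> \<le> Rmax R"
      using p abs_le_Rmax[of R]
      by (intro abs_expect_le_const[OF is_distribution_state_dist[OF transition p mu]])
         (auto simp: is_policy_def intro: abs_expect_le_const)
    then show ?thesis
      using discount_nonneg by (simp add: abs_mult mult_left_mono)
  qed
  ultimately show ?thesis
    using norm_sums_le by fastforce
qed

lemma abs_action_value_le:
  assumes p: "is_policy p"
  shows "\<bar>action_value P R \<gamma> p s a\<bar> \<le> Rmax R / (1 - \<gamma>)"
proof -
  have next_value_bound: "\<bar>expect (P s a) (state_value P R \<gamma> p)\<bar> \<le> Rmax R / (1 - \<gamma>)"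
    using transition unfolding state_value_def is_transition_def
    by (intro abs_expect_le_const abs_J_le[OF p is_distribution_dirac]) auto
  have "\<bar>action_value P R \<gamma> p s a\<bar> \<le> \<bar>R s a\<bar> + \<gamma> * \<bar>expect (P s a) (state_value P R \<gamma> p)\<bar>"
    unfolding action_value_def
    using abs_triangle_ineq[of "R s a" "\<gamma> * expect (P s a) (state_value P R \<gamma> p)"] discount_nonneg
    by (simp add: abs_mult)
  also have "\<dots> \<le> Rmax R + \<gamma> * (Rmax R / (1 - \<gamma>))"
    using abs_le_Rmax[of R s a] next_value_bound discount_nonneg by (intro add_mono mult_left_mono) auto
  also have "\<dots> = Rmax R / (1 - \<gamma>)"
    using discount_less_one by (simp add: field_simps)
  finally show ?thesis .
qed

lemma state_value_bellman:
  assumes p: "is_policy p"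
  shows "state_value P R \<gamma> p s = expect (p s) (action_value P R \<gamma> p s)"
proof -
  have "state_value P R \<gamma> p s
      = expect (dirac s) (\<lambda>s. expect (p s) (R s)) + \<gamma> * J P (step_dist P p (dirac s)) R \<gamma> p"
    unfolding state_value_def by (rule J_unfold[OF p is_distribution_dirac])
  also have "\<dots> = expect (p s) (R s) + \<gamma> * expect (step_dist P p (dirac s)) (state_value P R \<gamma> p)"
    by (simp add: expect_dirac J_eq_expect_state_value[OF p])
  also have "\<dots> = expect (p s) (action_value P R \<gamma> p s)"
    by (simp add: expect_step_dist expect_dirac action_value_def[abs_def] expect_add expect_cmult)
  finally show ?thesis .
qed

lemma expect_visit:
  assumes p: "is_policy p" and mu: "is_distribution mu"
  shows "expect (visit P mu \<gamma> p) f = (1 - \<gamma>) * (\<Sum>t. \<gamma> ^ t * expect (state_dist P mu p t) f)"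
proof -
  have "expect (dirac s) (state_dist P mu p t) = state_dist P mu p t s" for s t
    by (rule expect_dirac)
  then have "summable (\<lambda>t. \<gamma> ^ t * state_dist P mu p t s)" for s
    using summable_discounted_expect[OF p mu, of "dirac s"]
    by (simp add: expect_def mult.commute)
  then have "expect f (\<lambda>s. \<Sum>t. \<gamma> ^ t * state_dist P mu p t s)
      = (\<Sum>t. expect f (\<lambda>s. \<gamma> ^ t * state_dist P mu p t s))"
    by (rule expect_suminf)
  moreover have "expect (visit P mu \<gamma> p) f = (1 - \<gamma>) * expect f (\<lambda>s. \<Sum>t. \<gamma> ^ t * state_dist P mu p t s)"
    by (simp add: expect_def visit_def sum_distrib_left mult_ac)
  moreover have "expect f (\<lambda>s. \<gamma> ^ t * state_dist P mu p t s) = \<gamma> ^ t * expect (state_dist P mu p t) f" for t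
    by (simp add: expect_def sum_distrib_left mult_ac)
  ultimately show ?thesis
    by simp
qed

lemma performance_difference:
  assumes pa: "is_policy pa" and pp: "is_policy pp" and mu: "is_distribution mu"
  shows "(\<lambda>t. \<gamma> ^ t * expect (state_dist P mu pa t)
              (\<lambda>s. expect (\<lambda>a. pa s a - pp s a) (action_value P R \<gamma> pp s)))
           sums (J P mu R \<gamma> pa - J P mu R \<gamma> pp)"
proof -
  define V where "V = state_value P R \<gamma> pp"
  define d where "d t = state_dist P mu pa t" for t
  define F where "F t = \<gamma> ^ t * expect (d t) V" for t
  have advantage: "expect (\<lambda>a. pa s a - pp s a) (action_value P R \<gamma> pp s)
      = expect (pa s) (R s) + \<gamma> * expect (pa s) (\<lambda>a. expect (P s a) V) - V s" for s
  proof -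
    have "expect (pa s) (action_value P R \<gamma> pp s)
        = expect (pa s) (R s) + \<gamma> * expect (pa s) (\<lambda>a. expect (P s a) V)"
      by (simp add: action_value_def[abs_def] expect_add expect_cmult V_def)
    then show ?thesis
      by (simp add: expect_diff_left V_def state_value_bellman[OF pp])
  qed
  have "expect (d t) (\<lambda>s. expect (pa s) (\<lambda>a. expect (P s a) V)) = expect (d (Suc t)) V" for t
    by (simp add: d_def state_dist_Suc_step expect_step_dist del: state_dist.simps(2))
  then have telescoped: "\<gamma> ^ t * expect (d t) (\<lambda>s. expect (\<lambda>a. pa s a - pp s a) (action_value P R \<gamma> pp s))
      = \<gamma> ^ t * expect (d t) (\<lambda>s. expect (pa s) (R s)) + (F (Suc t) - F t)" for t
    by (simp add: advantage expect_add expect_diff expect_cmult F_def algebra_simps)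
  have "(\<lambda>t. \<gamma> ^ t * expect (d t) (\<lambda>s. expect (pa s) (R s))) sums J P mu R \<gamma> pa"
    unfolding J_eq_suminf d_def by (rule summable_sums[OF summable_discounted_expect[OF pa mu]])
  moreover have "(\<lambda>t. F (Suc t) - F t) sums (0 - F 0)"
    unfolding F_def d_def
    by (rule telescope_sums[OF summable_LIMSEQ_zero[OF summable_discounted_expect[OF pa mu]]])
  moreover have "F 0 = J P mu R \<gamma> pp"
    by (simp add: F_def d_def V_def J_eq_expect_state_value[OF pp])
  ultimately show ?thesis
    unfolding d_def[symmetric] telescoped using sums_add by fastforce
qed

lemma performance_difference_bound:
  assumes pa: "is_policy pa" and pp: "is_policy pp" and mu: "is_distribution mu"
  shows "\<bar>J P mu R \<gamma> pa - J P mu R \<gamma> pp\<bar>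
           \<le> Rmax R / (1 - \<gamma>)^2 * expect (visit P mu \<gamma> pa) (\<lambda>s. \<Sum>a\<in>UNIV. \<bar>pa s a - pp s a\<bar>)"
proof -
  define C where "C = Rmax R / (1 - \<gamma>)"
  define h where "h s = (\<Sum>a\<in>UNIV. \<bar>pa s a - pp s a\<bar>)" for s
  define d where "d t = state_dist P mu pa t" for t
  have advantage_bound: "\<bar>expect (\<lambda>a. pa s a - pp s a) (action_value P R \<gamma> pp s)\<bar> \<le> C * h s" for s
    unfolding C_def h_def by (rule abs_expect_le_l1) (rule abs_action_value_le[OF pp])
  have "\<bar>\<gamma> ^ t * expect (d t) (\<lambda>s. expect (\<lambda>a. pa s a - pp s a) (action_value P R \<gamma> pp s))\<bar>
      \<le> C * (\<gamma> ^ t * expect (d t) h)" for t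
  proof -
    have "\<bar>expect (d t) (\<lambda>s. expect (\<lambda>a. pa s a - pp s a) (action_value P R \<gamma> pp s))\<bar>
        \<le> C * expect (d t) h"
      unfolding d_def expect_cmult[symmetric]
      by (rule expect_abs_le[OF is_distribution_state_dist[OF transition pa mu] advantage_bound])
    then have "\<gamma> ^ t * \<bar>expect (d t) (\<lambda>s. expect (\<lambda>a. pa s a - pp s a) (action_value P R \<gamma> pp s))\<bar>
        \<le> \<gamma> ^ t * (C * expect (d t) h)"
      by (rule mult_left_mono) (simp add: discount_nonneg)
    then show ?thesis
      using discount_nonneg by (simp add: abs_mult mult.left_commute)
  qed
  moreover have "(\<lambda>t. C * (\<gamma> ^ t * expect (d t) h)) sums (C * (\<Sum>t. \<gamma> ^ t * expect (d t) h))"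
    unfolding d_def by (intro sums_mult summable_sums summable_discounted_expect pa mu)
  ultimately have "\<bar>J P mu R \<gamma> pa - J P mu R \<gamma> pp\<bar> \<le> C * (\<Sum>t. \<gamma> ^ t * expect (d t) h)"
    using norm_sums_le[OF performance_difference[OF pa pp mu, folded d_def]] by fastforce
  also have "\<dots> = Rmax R / (1 - \<gamma>)^2 * ((1 - \<gamma>) * (\<Sum>t. \<gamma> ^ t * expect (d t) h))"
    using discount_less_one by (simp add: C_def power2_eq_square)
  also have "\<dots> = Rmax R / (1 - \<gamma>)^2 * expect (visit P mu \<gamma> pa) h"
    by (simp add: expect_visit[OF pa mu] d_def)
  finally show ?thesis
    unfolding h_def .
qed

end

lemma is_policy_mix_policy:
  assumes p: "is_policy p" and q: "is_policy q" and T: "\<And>s. 0 \<le> T s \<and> T s \<le> 1"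
  shows "is_policy (mix_policy T p q)"
  unfolding is_policy_def is_distribution_def
proof (intro allI conjI)
  fix s a
  show "0 \<le> mix_policy T p q s a"
    using p q T[of s] unfolding mix_policy_def is_policy_def is_distribution_def
    by (intro add_nonneg_nonneg mult_nonneg_nonneg) auto
next
  fix s
  show "(\<Sum>a\<in>UNIV. mix_policy T p q s a) = 1"
    using p q unfolding mix_policy_def is_policy_def is_distribution_def
    by (simp add: sum.distrib flip: sum_distrib_left)
qed

lemma mix_policy_minus_right: "mix_policy T p q s a - q s a = T s * (p s a - q s a)"
  by (simp add: mix_policy_def algebra_simps)

theorem theoremA4:
  fixes P :: "'s::finite \<Rightarrow> 'a::finite \<Rightarrow> 's \<Rightarrow> real"
    and mu :: "'s \<Rightarrow> real"
    and R :: "'s \<Rightarrow> 'a \<Rightarrow> real"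
    and \<gamma> :: real
    and pih piav pistar :: "'s \<Rightarrow> 'a \<Rightarrow> real"
    and T :: "'s \<Rightarrow> real"
  assumes trans: "is_transition P"
    and init: "is_distribution mu"
    and gamma: "0 < \<gamma>" "\<gamma> < 1"
    and pol_h: "is_policy pih"
    and pol_av: "is_policy piav"
    and switch: "\<forall>s. T s \<in> {0, 1}"
    and opt: "is_policy pistar"
             "\<forall>p. is_policy p \<longrightarrow> J P mu R \<gamma> p \<le> J P mu R \<gamma> pistar"
    and pos: "(\<Sum>s\<in>UNIV. visit P mu \<gamma> (mix_policy T pih piav) s
                 * (\<Sum>a\<in>UNIV. \<bar>pih s a - piav s a\<bar>)) > 0"
  shows
    "let pimix = mix_policy T pih piav;
         D = (\<Sum>s\<in>UNIV. visit P mu \<gamma> pimix s * (\<Sum>a\<in>UNIV. \<bar>pih s a - piav s a\<bar>));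
         \<beta> = (\<Sum>s\<in>UNIV. visit P mu \<gamma> pimix s * (\<Sum>a\<in>UNIV. \<bar>T s * (pih s a - piav s a)\<bar>)) / D
     in \<bar>J P mu R \<gamma> pistar - J P mu R \<gamma> piav\<bar>
          \<le> \<beta> * Rmax R / (1 - \<gamma>)^2 * D + \<bar>J P mu R \<gamma> pistar - J P mu R \<gamma> pimix\<bar>"
proof -
  interpret discounted_mdp P \<gamma>
    using trans gamma by unfold_locales auto
  define pimix where "pimix = mix_policy T pih piav"
  define D where "D = (\<Sum>s\<in>UNIV. visit P mu \<gamma> pimix s * (\<Sum>a\<in>UNIV. \<bar>pih s a - piav s a\<bar>))"
  define N where "N = (\<Sum>s\<in>UNIV. visit P mu \<gamma> pimix s * (\<Sum>a\<in>UNIV. \<bar>T s * (pih s a - piav s a)\<bar>))"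
  have "0 \<le> T s \<and> T s \<le> 1" for s
    using switch by (metis empty_iff insert_iff order_refl zero_le_one)
  then have "is_policy pimix"
    unfolding pimix_def by (rule is_policy_mix_policy[OF pol_h pol_av])
  then have "\<bar>J P mu R \<gamma> pimix - J P mu R \<gamma> piav\<bar> \<le> Rmax R / (1 - \<gamma>)^2 * N"
    using performance_difference_bound[OF _ pol_av init, of pimix R]
    by (simp add: N_def expect_def pimix_def mix_policy_minus_right)
  moreover have "N / D * Rmax R / (1 - \<gamma>)^2 * D = Rmax R / (1 - \<gamma>)^2 * N"
    using pos unfolding D_def pimix_def by simp
  ultimately show ?thesis
    unfolding Let_def pimix_def[symmetric] D_def[symmetric] N_def[symmetric] by linarith
qed

end
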